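(* Let $w$ be a word of length $k$. Then for every $n > 2k$, $H_w(n) \ge \sum_{i \in I} H_w(n-k+i)$.
   Context: Let $\Omega$ be a finite alphabet with $q\ge2$ letters; $w = w_k\dots w_1$. $h_w(n)$: number of strings of length $n$ over $\Omega$ whose last $k$ characters form $w$ and with no other occurrence of $w$ as a block of $k$ consecutive characters ($h_w(n)=0$ for $n<k$). $H_w(n) = q h_w(n-1) - h_w(n)$. Autocorrelation digits: $b_i = 1$ ($1\le i\le k$) iff $w_j = w_{k-i+j}$ for $j=1,\dots,i$. For $1\le i\le k-1$ with $b_i=1$, $[i] = \max\{j\in\{1,\dots,k-1\} : b_j = 1,\ i = k-t(k-j) \text{ for some integer } 1\le t\le\lfloor k/(k-j)\rfloor\}$; $I = \{[i] : 1\le i\le k-1,\ b_i=1\}$ (empty if no such $i$). *)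

theory Defs
  imports Main
begin

text \<open>Words are lists; the list w = [w_k, ..., w_1] is written left to right,
  so the paper's letter w_j (1 \<le> j \<le> k) is  w ! (k - j).\<close>

definition wlet :: "'a list \<Rightarrow> nat \<Rightarrow> 'a" where
  "wlet w j = w ! (length w - j)"

definition hw :: "'a set \<Rightarrow> 'a list \<Rightarrow> nat \<Rightarrow> nat" where
  "hw \<Omega> w n = (if n < length w then 0 else
     card {s. length s = n \<and> set s \<subseteq> \<Omega> \<and> drop (n - length w) s = w \<and>
              (\<forall>p. p + length w \<le> n \<and> take (length w) (drop p s) = w \<longrightarrow> p = n - length w)})"

definition Hw :: "'a set \<Rightarrow> 'a list \<Rightarrow> nat \<Rightarrow> int" where
  "Hw \<Omega> w n = int (card \<Omega>) * int (hw \<Omega> w (n - 1)) - int (hw \<Omega> w n)"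

definition autoc :: "'a list \<Rightarrow> nat \<Rightarrow> bool" where
  "autoc w i = (1 \<le> i \<and> i \<le> length w \<and>
     (\<forall>j\<in>{1..i}. wlet w j = wlet w (length w - i + j)))"

definition brk :: "'a list \<Rightarrow> nat \<Rightarrow> nat" where
  "brk w i = Max {j \<in> {1..length w - 1}. autoc w j \<and>
     (\<exists>t::nat. 1 \<le> t \<and> t \<le> length w div (length w - j) \<and>
        int i = int (length w) - int t * (int (length w) - int j))}"

definition Iset :: "'a list \<Rightarrow> nat set" where
  "Iset w = {brk w i | i. 1 \<le> i \<and> i \<le> length w - 1 \<and> autoc w i}"

end

theory Submission
  imports Defs
begin

text \<open>Let k = |w|. Prepending a letter to a string counted by h_w(n-1) yields a string of
  length n in which w occurs either only at the end or exactly at both ends; hence H_w(n)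
  counts the strings of length n in which w occurs exactly at positions 0 and n-k.
  If i < k is a period of the autocorrelation, prefixing the first k-i letters of w to such a
  string of length n-k+i gives a string of length n with occurrences at 0, k-i and n-k and
  none in [k, n-k); distinct i give distinct strings. Such a string has the form w a y with an
  occurrence of w overlapping a, and by a Fine--Wilf argument a is the only letter that creates
  an overlapping occurrence in w _ y. Replacing it by another letter (|\<Omega>| \<ge> 2) injects these
  strings back into the ones counted by H_w(n).\<close>

definition occurs_at :: "'a list \<Rightarrow> 'a list \<Rightarrow> nat \<Rightarrow> bool" where
  "occurs_at w s r \<longleftrightarrow> r + length w \<le> length s \<and> take (length w) (drop r s) = w"

lemma occurs_at_append: "occurs_at w (xs @ ys) (length xs + r) = occurs_at w ys r"
  by (auto simp: occurs_at_def)

lemma occurs_at_Cons: "occurs_at w (a # s) (Suc r) = occurs_at w s r"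
  by (auto simp: occurs_at_def)

lemma occurs_at_0_iff: "occurs_at w s 0 \<longleftrightarrow> take (length w) s = w"
  by (auto simp: occurs_at_def dest: arg_cong[of _ _ length])

lemma occurs_at_nth:
  assumes "occurs_at w s r" "j < length w"
  shows "s ! (r + j) = w ! j"
  using assms by (auto simp: occurs_at_def dest: arg_cong[of _ _ "\<lambda>xs. xs ! j"])

text \<open>A weak form of the Fine--Wilf periodicity lemma.\<close>

lemma two_periods_agree:
  fixes f :: "nat \<Rightarrow> 'a"
  assumes "0 < p" "0 < q"
    and "\<And>i. i + p < p + q - 1 \<Longrightarrow> f i = f (i + p)"
    and "\<And>i. i + q < p + q - 1 \<Longrightarrow> f i = f (i + q)"
  shows "f (p - 1) = f (q - 1)"
  using assms
proof (induction "p + q" arbitrary: p q rule: less_induct)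
  case less
  show ?case
  proof (cases p q rule: linorder_cases)
    case less_pq: less
    have period_diff: "f i = f (i + (q - p))" if "i + (q - p) < p + (q - p) - 1" for i
      using less.prems(3)[of "i + (q - p)"] less.prems(4)[of i] that less_pq
      by (simp add: algebra_simps)
    have "f (p - 1) = f (q - p - 1)"
      using less.hyps[of p "q - p"] less.prems less_pq period_diff by auto
    also have "\<dots> = f (q - 1)"
      using less.prems(1) less.prems(3)[of "q - p - 1"] less_pq by (simp add: algebra_simps)
    finally show ?thesis .
  next
    case greater
    have period_diff: "f i = f (i + (p - q))" if "i + (p - q) < (p - q) + q - 1" for i
      using less.prems(4)[of "i + (p - q)"] less.prems(3)[of i] that greater
      by (simp add: algebra_simps)
    have "f (p - q - 1) = f (q - 1)"
      using less.hyps[of "p - q" q] less.prems greater period_diff by auto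
    moreover have "f (p - q - 1) = f (p - 1)"
      using less.prems(2) less.prems(4)[of "p - q - 1"] greater by (simp add: algebra_simps)
    ultimately show ?thesis by simp
  qed simp
qed

lemma overlap_letter_unique_lt:
  assumes occ_a: "occurs_at w (w @ a # y) r1" and occ_b: "occurs_at w (w @ b # y) r2"
    and r: "0 < r1" "r1 < r2" "r2 \<le> length w"
  shows "a = b"
proof -
  define k where "k = length w"
  define d where "d = r2 - r1"
  \<comment> \<open>On this window of w the occurrence at r1 gives period r1, and comparing both
    occurrences over the common tail y gives period r2 - r1.\<close>
  define f where "f i = w ! (k - r2 + 1 + i)" for i
  have at_a: "(w @ a # y) ! (r1 + j) = w ! j" if "j < k" for j
    using occurs_at_nth[OF occ_a] that by (simp add: k_def)
  have at_b: "(w @ b # y) ! (r2 + j) = w ! j" if "j < k" for j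
    using occurs_at_nth[OF occ_b] that by (simp add: k_def)
  have a: "a = w ! (k - r1)" and b: "b = w ! (k - r2)"
    using at_a[of "k - r1"] at_b[of "k - r2"] r by (simp_all add: k_def)
  have period_r1: "w ! m = w ! (r1 + m)" if "r1 + m < k" for m
    using at_a[of m] that by (simp add: nth_append k_def)
  have period_d: "w ! (k - r2 + 1 + i) = w ! (k - r1 + 1 + i)" if "i + 1 < r1" for i
  proof -
    have "w ! (k - r2 + 1 + i) = (w @ b # y) ! (k + 1 + i)"
      using at_b[of "k - r2 + 1 + i"] that r by (simp add: k_def)
    also have "\<dots> = (w @ a # y) ! (k + 1 + i)"
      by (simp add: nth_append k_def)
    also have "\<dots> = w ! (k - r1 + 1 + i)"
      using at_a[of "k - r1 + 1 + i"] that r by (simp add: k_def)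
    finally show ?thesis .
  qed
  have "f (r1 - 1) = f (d - 1)"
  proof (rule two_periods_agree)
    show "f i = f (i + r1)" if "i + r1 < r1 + d - 1" for i
      using period_r1[of "k - r2 + 1 + i"] that r unfolding f_def d_def k_def
      by (simp add: algebra_simps)
    show "f i = f (i + d)" if "i + d < r1 + d - 1" for i
      using period_d[of i] that r unfolding f_def d_def k_def
      by (simp add: algebra_simps)
  qed (use r d_def in auto)
  moreover have "f (d - 1) = a"
  proof -
    have "k - r2 + 1 + (d - 1) = k - r1" using r by (simp add: d_def k_def)
    then show ?thesis using a by (simp add: f_def)
  qed
  moreover have "f (r1 - 1) = b"
  proof -
    have "k - r2 + 1 + (r1 - 1) = r1 + (k - r2)" using r by (simp add: k_def)
    then show ?thesis using b period_r1[of "k - r2"] r by (simp add: f_def k_def)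
  qed
  ultimately show ?thesis by simp
qed

lemma overlap_letter_unique:
  assumes "occurs_at w (w @ a # y) r1" "0 < r1" "r1 \<le> length w"
    and "occurs_at w (w @ b # y) r2" "0 < r2" "r2 \<le> length w"
  shows "a = b"
proof (cases r1 r2 rule: linorder_cases)
  case equal
  then show ?thesis
    using occurs_at_nth[OF assms(1), of "length w - r1"] occurs_at_nth[OF assms(4), of "length w - r1"]
      assms by simp
qed (use overlap_letter_unique_lt assms in metis)+

definition last_occ_only :: "'a set \<Rightarrow> 'a list \<Rightarrow> nat \<Rightarrow> 'a list set" where
  "last_occ_only \<Omega> w n =
     {s. length s = n \<and> set s \<subseteq> \<Omega> \<and> (\<forall>p. occurs_at w s p \<longleftrightarrow> p = n - length w)}"

definition end_occs_only :: "'a set \<Rightarrow> 'a list \<Rightarrow> nat \<Rightarrow> 'a list set" where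
  "end_occs_only \<Omega> w n =
     {s. length s = n \<and> set s \<subseteq> \<Omega> \<and> (\<forall>p. occurs_at w s p \<longleftrightarrow> p = 0 \<or> p = n - length w)}"

lemma finite_lists_length_eq_Collect:
  "finite \<Omega> \<Longrightarrow> finite {s. length s = n \<and> set s \<subseteq> \<Omega> \<and> P s}"
  by (rule finite_subset[OF _ finite_lists_length_eq[of \<Omega> n]]) auto

lemma finite_last_occ_only: "finite \<Omega> \<Longrightarrow> finite (last_occ_only \<Omega> w n)"
  unfolding last_occ_only_def by (rule finite_lists_length_eq_Collect)

lemma finite_end_occs_only: "finite \<Omega> \<Longrightarrow> finite (end_occs_only \<Omega> w n)"
  unfolding end_occs_only_def by (rule finite_lists_length_eq_Collect)

lemma hw_eq_card_last_occ_only: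
  assumes "length w \<le> n"
  shows "hw \<Omega> w n = card (last_occ_only \<Omega> w n)"
proof -
  have at_end: "drop (n - length w) s = w \<longleftrightarrow> occurs_at w s (n - length w)"
    and at: "occurs_at w s p \<longleftrightarrow> p + length w \<le> n \<and> take (length w) (drop p s) = w"
    if "length s = n" for s :: "'a list" and p
    using that assms by (auto simp: occurs_at_def)
  have "{s. length s = n \<and> set s \<subseteq> \<Omega> \<and> drop (n - length w) s = w \<and>
      (\<forall>p. p + length w \<le> n \<and> take (length w) (drop p s) = w \<longrightarrow> p = n - length w)}
    = last_occ_only \<Omega> w n"
    unfolding last_occ_only_def using at_end at by blast
  then show ?thesis
    using assms by (simp add: hw_def)
qed

lemma Cons_mem_last_occ_or_end_occs_iff:
  assumes "length w < n"
  shows "a # s \<in> last_occ_only \<Omega> w n \<union> end_occs_only \<Omega> w n \<longleftrightarrow>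
    a \<in> \<Omega> \<and> s \<in> last_occ_only \<Omega> w (n - 1)"
proof -
  define m where "m = n - length w"
  have "0 < m" using assms by (simp add: m_def)
  have split_0: "(\<forall>p. P p \<longleftrightarrow> p = m) \<or> (\<forall>p. P p \<longleftrightarrow> p = 0 \<or> p = m) \<longleftrightarrow>
      (\<forall>p. P (Suc p) \<longleftrightarrow> Suc p = m)" for P
  proof
    assume "\<forall>p. P (Suc p) \<longleftrightarrow> Suc p = m"
    then have "P p \<longleftrightarrow> (p = 0 \<and> P 0) \<or> p = m" for p
      using \<open>0 < m\<close> by (cases p) auto
    then show "(\<forall>p. P p \<longleftrightarrow> p = m) \<or> (\<forall>p. P p \<longleftrightarrow> p = 0 \<or> p = m)"
      by (cases "P 0") auto
  qed auto
  have shift: "Suc p = m \<longleftrightarrow> p = n - 1 - length w" for p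
    using assms by (auto simp: m_def)
  have "a # s \<in> last_occ_only \<Omega> w n \<union> end_occs_only \<Omega> w n \<longleftrightarrow>
      length (a # s) = n \<and> set (a # s) \<subseteq> \<Omega> \<and>
      ((\<forall>p. occurs_at w (a # s) p \<longleftrightarrow> p = m) \<or> (\<forall>p. occurs_at w (a # s) p \<longleftrightarrow> p = 0 \<or> p = m))"
    unfolding last_occ_only_def end_occs_only_def m_def by blast
  also have "\<dots> \<longleftrightarrow> length (a # s) = n \<and> set (a # s) \<subseteq> \<Omega> \<and>
      (\<forall>p. occurs_at w s p \<longleftrightarrow> p = n - 1 - length w)"
    by (simp only: split_0 occurs_at_Cons shift)
  also have "\<dots> \<longleftrightarrow> a \<in> \<Omega> \<and> s \<in> last_occ_only \<Omega> w (n - 1)"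
    using assms by (auto simp: last_occ_only_def)
  finally show ?thesis .
qed

lemma card_times_last_occ_only:
  assumes "finite \<Omega>" and "length w < n"
  shows "card \<Omega> * card (last_occ_only \<Omega> w (n - 1)) =
    card (last_occ_only \<Omega> w n) + card (end_occs_only \<Omega> w n)"
proof -
  have Nil_notin: "[] \<notin> last_occ_only \<Omega> w n \<union> end_occs_only \<Omega> w n"
    using assms(2) by (auto simp: last_occ_only_def end_occs_only_def)
  have image: "(\<lambda>(a, s). a # s) ` (\<Omega> \<times> last_occ_only \<Omega> w (n - 1)) =
      last_occ_only \<Omega> w n \<union> end_occs_only \<Omega> w n"
  proof (rule set_eqI)
    fix t
    show "t \<in> (\<lambda>(a, s). a # s) ` (\<Omega> \<times> last_occ_only \<Omega> w (n - 1)) \<longleftrightarrow>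
      t \<in> last_occ_only \<Omega> w n \<union> end_occs_only \<Omega> w n"
      using Cons_mem_last_occ_or_end_occs_iff[OF assms(2)] Nil_notin by (cases t) auto
  qed
  have inj: "inj_on (\<lambda>(a, s). a # s) (\<Omega> \<times> last_occ_only \<Omega> w (n - 1))"
    by (auto simp: inj_on_def)
  have disjoint: "last_occ_only \<Omega> w n \<inter> end_occs_only \<Omega> w n = {}"
  proof -
    have "\<not> occurs_at w s 0" if "s \<in> last_occ_only \<Omega> w n" for s
      using that assms(2) by (simp add: last_occ_only_def)
    moreover have "occurs_at w s 0" if "s \<in> end_occs_only \<Omega> w n" for s
      using that by (simp add: end_occs_only_def)
    ultimately show ?thesis by blast
  qed
  have "card \<Omega> * card (last_occ_only \<Omega> w (n - 1)) = card (\<Omega> \<times> last_occ_only \<Omega> w (n - 1))"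
    by (simp add: card_cartesian_product)
  also have "\<dots> = card (last_occ_only \<Omega> w n \<union> end_occs_only \<Omega> w n)"
    unfolding image[symmetric] card_image[OF inj] ..
  also have "\<dots> = card (last_occ_only \<Omega> w n) + card (end_occs_only \<Omega> w n)"
    using assms(1) disjoint by (simp add: card_Un_disjoint finite_last_occ_only finite_end_occs_only)
  finally show ?thesis .
qed

lemma Hw_eq_card_end_occs_only:
  assumes "finite \<Omega>" and "length w < n"
  shows "Hw \<Omega> w n = int (card (end_occs_only \<Omega> w n))"
proof -
  have "Hw \<Omega> w n = int (card \<Omega> * card (last_occ_only \<Omega> w (n - 1))) - int (card (last_occ_only \<Omega> w n))"
    using assms(2) hw_eq_card_last_occ_only[of w "n - 1" \<Omega>] hw_eq_card_last_occ_only[of w n \<Omega>]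
    unfolding Hw_def by simp
  then show ?thesis
    unfolding card_times_last_occ_only[OF assms] by simp
qed

definition overlapped_ends :: "'a set \<Rightarrow> 'a list \<Rightarrow> nat \<Rightarrow> 'a list set" where
  "overlapped_ends \<Omega> w n =
     {s. length s = n \<and> set s \<subseteq> \<Omega> \<and> occurs_at w s 0 \<and> occurs_at w s (n - length w) \<and>
         (\<forall>p. length w \<le> p \<and> p < n - length w \<longrightarrow> \<not> occurs_at w s p) \<and>
         (\<exists>r. 0 < r \<and> r < length w \<and> occurs_at w s r)}"

lemma finite_overlapped_ends: "finite \<Omega> \<Longrightarrow> finite (overlapped_ends \<Omega> w n)"
  unfolding overlapped_ends_def by (rule finite_lists_length_eq_Collect)

lemma autoc_drop_eq_take:
  assumes "autoc w i"
  shows "drop (length w - i) w = take i w"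
proof (rule nth_equalityI)
  have "i \<le> length w" using assms by (simp add: autoc_def)
  then show "length (drop (length w - i) w) = length (take i w)" by simp
  fix m assume "m < length (drop (length w - i) w)"
  then have m: "m < i" using \<open>i \<le> length w\<close> by simp
  have "wlet w (i - m) = wlet w (length w - i + (i - m))"
    using assms m unfolding autoc_def by simp
  then show "drop (length w - i) w ! m = take i w ! m"
    using m \<open>i \<le> length w\<close> by (simp add: wlet_def algebra_simps)
qed

lemma occurs_at_of_append_eq:
  assumes "xs @ t = xs' @ t'" and "length xs \<le> length xs'" and "occurs_at w t' 0"
  shows "occurs_at w t (length xs' - length xs)"
proof -
  have "occurs_at w (xs' @ t') (length xs' + 0)"
    using assms(3) by (simp only: occurs_at_append)
  then have "occurs_at w (xs @ t) (length xs + (length xs' - length xs))"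
    using assms(1,2) by simp
  then show ?thesis by (simp only: occurs_at_append)
qed

lemma border_prefix_mem_overlapped_ends:
  assumes "set w \<subseteq> \<Omega>" and "2 * length w < n" and "autoc w i" and "i < length w"
    and t: "t \<in> end_occs_only \<Omega> w (n - length w + i)"
  shows "take (length w - i) w @ t \<in> overlapped_ends \<Omega> w n"
proof -
  define k where "k = length w"
  define p where "p = k - i"
  define s where "s = take p w @ t"
  have "0 < i" using assms(3) by (simp add: autoc_def)
  have len_t: "length t = n - k + i" and set_t: "set t \<subseteq> \<Omega>"
    and occ_t: "occurs_at w t r \<longleftrightarrow> r = 0 \<or> r = n - 2 * k + i" for r
    using t assms(2) unfolding end_occs_only_def k_def by auto
  have len_prefix: "length (take p w) = p" by (simp add: p_def k_def)
  have occ_s: "occurs_at w s (p + r) \<longleftrightarrow> r = 0 \<or> r = n - 2 * k + i" for r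
    using occ_t[of r] occurs_at_append[of w "take p w" t r, unfolded len_prefix] by (simp add: s_def)
  have "take k t = w"
    using occ_t[of 0] by (simp add: occurs_at_0_iff k_def)
  then have "drop p w = take i t"
    using autoc_drop_eq_take[OF assms(3)] \<open>i < length w\<close>
    by (metis k_def p_def less_imp_le min.absorb1 take_take)
  then have "take k s = take p w @ drop p w"
    using \<open>i < length w\<close> len_prefix by (simp add: s_def p_def k_def)
  then have "take k s = w" by simp
  then have "occurs_at w s 0" by (simp add: occurs_at_0_iff k_def)
  moreover have "occurs_at w s (n - k)"
    using occ_s[of "n - 2 * k + i"] assms(2) \<open>i < length w\<close> by (simp add: p_def k_def)
  moreover have "\<not> occurs_at w s r" if "k \<le> r" "r < n - k" for r
    using occ_s[of "r - p"] that \<open>0 < i\<close> \<open>i < length w\<close> assms(2) by (simp add: p_def k_def)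
  moreover have "occurs_at w s p" and "0 < p" and "p < k"
    using occ_s[of 0] \<open>0 < i\<close> \<open>i < length w\<close> by (simp_all add: p_def k_def)
  moreover have "length s = n" and "set s \<subseteq> \<Omega>"
    using len_t set_t assms(1,2) \<open>i < length w\<close> set_take_subset[of p w]
    by (auto simp: s_def len_prefix p_def k_def)
  ultimately show ?thesis
    unfolding s_def p_def k_def[symmetric] overlapped_ends_def by blast
qed

lemma border_prefix_inj:
  assumes "2 * length w < n" and "i < length w" and "j < length w"
    and t: "t \<in> end_occs_only \<Omega> w (n - length w + i)"
    and u: "u \<in> end_occs_only \<Omega> w (n - length w + j)"
    and eq: "take (length w - i) w @ t = take (length w - j) w @ u"
  shows "i = j"
proof -
  have occ_end_only: "occurs_at w v r \<longleftrightarrow> r = 0 \<or> r = n - 2 * length w + l"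
    if "v \<in> end_occs_only \<Omega> w (n - length w + l)" for v l r
    using that assms(1) by (auto simp: end_occs_only_def)
  show ?thesis
  proof (cases i j rule: linorder_cases)
    case less
    have "occurs_at w u (j - i)"
      using occurs_at_of_append_eq[OF eq[symmetric]] occ_end_only[OF t, of 0] less \<open>j < length w\<close>
      by simp
    then show ?thesis
      using occ_end_only[OF u] less assms(1) by simp
  next
    case greater
    have "occurs_at w t (i - j)"
      using occurs_at_of_append_eq[OF eq] occ_end_only[OF u, of 0] greater \<open>i < length w\<close>
      by simp
    then show ?thesis
      using occ_end_only[OF t] greater assms(1) by simp
  qed
qed

lemma sum_card_end_occs_only_le_card_overlapped_ends:
  assumes "finite \<Omega>" and "set w \<subseteq> \<Omega>" and "2 * length w < n"
    and I: "I \<subseteq> {i. i < length w \<and> autoc w i}"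
  shows "(\<Sum>i\<in>I. card (end_occs_only \<Omega> w (n - length w + i))) \<le> card (overlapped_ends \<Omega> w n)"
proof -
  let ?S = "Sigma I (\<lambda>i. end_occs_only \<Omega> w (n - length w + i))"
  let ?f = "\<lambda>(i, t). take (length w - i) w @ t"
  have "finite I"
    using I by (rule finite_subset) auto
  have "inj_on ?f ?S"
  proof (rule inj_onI, clarify)
    fix i t j u
    assume "i \<in> I" "t \<in> end_occs_only \<Omega> w (n - length w + i)"
      "j \<in> I" "u \<in> end_occs_only \<Omega> w (n - length w + j)"
      "take (length w - i) w @ t = take (length w - j) w @ u"
    moreover from this have "i = j"
      using border_prefix_inj[OF assms(3)] I by blast
    ultimately show "i = j \<and> t = u" by simp
  qed
  moreover have "?f ` ?S \<subseteq> overlapped_ends \<Omega> w n"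
    using border_prefix_mem_overlapped_ends[OF assms(2,3)] I by auto
  ultimately have "card ?S \<le> card (overlapped_ends \<Omega> w n)"
    using assms(1) by (simp add: card_inj_on_le finite_overlapped_ends)
  then show ?thesis
    using \<open>finite I\<close> assms(1) by (simp add: card_SigmaI finite_end_occs_only)
qed

definition overlap_letters :: "'a list \<Rightarrow> 'a list \<Rightarrow> 'a set" where
  "overlap_letters w y = {a. \<exists>r. 0 < r \<and> r \<le> length w \<and> occurs_at w (w @ a # y) r}"

lemma overlap_letters_unique:
  assumes "a \<in> overlap_letters w y" and "b \<in> overlap_letters w y"
  shows "a = b"
proof -
  obtain r1 r2 where "occurs_at w (w @ a # y) r1" "0 < r1" "r1 \<le> length w"
    and "occurs_at w (w @ b # y) r2" "0 < r2" "r2 \<le> length w"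
    using assms unfolding overlap_letters_def by blast
  then show ?thesis by (rule overlap_letter_unique)
qed

lemma exists_notin_overlap_letters:
  assumes "finite \<Omega>" and "2 \<le> card \<Omega>"
  shows "\<exists>c\<in>\<Omega>. c \<notin> overlap_letters w y"
proof (rule ccontr)
  assume "\<not> (\<exists>c\<in>\<Omega>. c \<notin> overlap_letters w y)"
  then have "\<forall>a\<in>\<Omega>. \<forall>b\<in>\<Omega>. a = b"
    by (meson overlap_letters_unique)
  then have "card \<Omega> \<le> 1"
    using card_le_Suc0_iff_eq[OF assms(1)] by simp
  then show False using assms(2) by simp
qed

lemma occurs_at_past_letter:
  assumes "length xs < p"
  shows "occurs_at w (xs @ a # y) p \<longleftrightarrow> occurs_at w y (p - Suc (length xs))"
  using occurs_at_append[of w "xs @ [a]" y "p - Suc (length xs)"] assms by simp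

lemma overlapped_ends_split:
  assumes "s \<in> overlapped_ends \<Omega> w n" and "2 * length w < n"
  shows "s = w @ s ! length w # drop (Suc (length w)) s"
    and "s ! length w \<in> overlap_letters w (drop (Suc (length w)) s)"
proof -
  have "length w < length s" and prefix: "take (length w) s = w"
    using assms by (auto simp: overlapped_ends_def occurs_at_0_iff)
  then show split: "s = w @ s ! length w # drop (Suc (length w)) s"
    using id_take_nth_drop[of "length w" s, unfolded prefix] by blast
  obtain r where "0 < r" "r < length w" "occurs_at w s r"
    using assms(1) by (auto simp: overlapped_ends_def)
  moreover from \<open>occurs_at w s r\<close> have "occurs_at w (w @ s ! length w # drop (Suc (length w)) s) r"
    by (subst (asm) split)
  ultimately show "s ! length w \<in> overlap_letters w (drop (Suc (length w)) s)"
    unfolding overlap_letters_def by auto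
qed

lemma replace_overlap_letter_mem_end_occs_only:
  assumes s: "s \<in> overlapped_ends \<Omega> w n" and n: "2 * length w < n" and "set w \<subseteq> \<Omega>"
    and c: "c \<in> \<Omega>" "c \<notin> overlap_letters w (drop (Suc (length w)) s)"
  shows "w @ c # drop (Suc (length w)) s \<in> end_occs_only \<Omega> w n"
proof -
  define k where "k = length w"
  define y where "y = drop (Suc k) s"
  have s_split: "s = w @ s ! k # y"
    using overlapped_ends_split(1)[OF s n] unfolding k_def y_def .
  have len_s: "length s = n" and "set s \<subseteq> \<Omega>"
    using s by (auto simp: overlapped_ends_def)
  have occ_s_end: "occurs_at w s p \<longleftrightarrow> p = n - k" if "k < p" for p
  proof
    assume occ: "occurs_at w s p"
    then have "p + k \<le> n" using len_s by (simp add: occurs_at_def k_def)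
    moreover have "\<not> (k \<le> p \<and> p < n - k)"
      using s occ unfolding overlapped_ends_def k_def by blast
    ultimately show "p = n - k" using that by arith
  next
    assume "p = n - k"
    then show "occurs_at w s p" using s by (simp add: overlapped_ends_def k_def)
  qed
  have "occurs_at w (w @ c # y) p \<longleftrightarrow> p = 0 \<or> p = n - k" for p
  proof (cases "k < p")
    case True
    have "occurs_at w (w @ c # y) p \<longleftrightarrow> occurs_at w (w @ s ! k # y) p"
      using occurs_at_past_letter[of w p] True by (simp add: k_def)
    also have "\<dots> \<longleftrightarrow> occurs_at w s p"
      by (simp only: s_split[symmetric])
    finally show ?thesis
      using occ_s_end[OF True] True by simp
  next
    case False
    have "\<not> occurs_at w (w @ c # y) p" if "0 < p"
      using c(2) that False not_less unfolding overlap_letters_def k_def y_def by blast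
    then show ?thesis
      using False n by (cases "p = 0") (auto simp: occurs_at_0_iff k_def)
  qed
  moreover have "length (w @ c # y) = n" and "set (w @ c # y) \<subseteq> \<Omega>"
    using len_s n \<open>set s \<subseteq> \<Omega>\<close> \<open>set w \<subseteq> \<Omega>\<close> c(1) set_drop_subset[of "Suc k" s]
    by (auto simp: y_def k_def)
  ultimately show ?thesis
    unfolding end_occs_only_def k_def y_def by blast
qed

lemma card_overlapped_ends_le_card_end_occs_only:
  assumes "finite \<Omega>" and "2 \<le> card \<Omega>" and "set w \<subseteq> \<Omega>" and n: "2 * length w < n"
  shows "card (overlapped_ends \<Omega> w n) \<le> card (end_occs_only \<Omega> w n)"
proof -
  define tail where "tail s = drop (Suc (length w)) s" for s :: "'a list"
  define letter where "letter y = (SOME c. c \<in> \<Omega> \<and> c \<notin> overlap_letters w y)" for y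
  have letter: "letter y \<in> \<Omega> \<and> letter y \<notin> overlap_letters w y" for y
    unfolding letter_def by (rule someI_ex) (use exists_notin_overlap_letters[OF assms(1,2)] in blast)
  define replace where "replace s = w @ letter (tail s) # tail s" for s
  have "replace ` overlapped_ends \<Omega> w n \<subseteq> end_occs_only \<Omega> w n"
    using replace_overlap_letter_mem_end_occs_only[OF _ n assms(3)] letter
    by (auto simp: replace_def tail_def)
  moreover have "inj_on replace (overlapped_ends \<Omega> w n)"
  proof (rule inj_onI)
    fix s1 s2
    assume s1: "s1 \<in> overlapped_ends \<Omega> w n" and s2: "s2 \<in> overlapped_ends \<Omega> w n"
      and "replace s1 = replace s2"
    then have same_tail: "tail s1 = tail s2"
      unfolding replace_def by simp
    have split1: "s1 = w @ s1 ! length w # tail s1"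
      using overlapped_ends_split(1)[OF s1 n] unfolding tail_def .
    have split2: "s2 = w @ s2 ! length w # tail s2"
      using overlapped_ends_split(1)[OF s2 n] unfolding tail_def .
    have "s1 ! length w \<in> overlap_letters w (tail s1)"
      and "s2 ! length w \<in> overlap_letters w (tail s1)"
      using overlapped_ends_split(2)[OF s1 n] overlapped_ends_split(2)[OF s2 n] same_tail
      unfolding tail_def by simp_all
    then have "s1 ! length w = s2 ! length w"
      by (rule overlap_letters_unique)
    then have "w @ s1 ! length w # tail s1 = s2"
      by (simp only: same_tail split2[symmetric])
    with split1 show "s1 = s2" by (rule trans)
  qed
  ultimately show ?thesis
    using assms(1) by (simp add: card_inj_on_le finite_end_occs_only)
qed

lemma Iset_subset_autoc: "Iset w \<subseteq> {i. i < length w \<and> autoc w i}"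
proof
  fix j assume "j \<in> Iset w"
  then obtain i where j: "j = brk w i" and i: "1 \<le> i" "i \<le> length w - 1" "autoc w i"
    unfolding Iset_def by blast
  define S where "S = {j \<in> {1..length w - 1}. autoc w j \<and>
     (\<exists>t::nat. 1 \<le> t \<and> t \<le> length w div (length w - j) \<and>
        int i = int (length w) - int t * (int (length w) - int j))}"
  have "1 \<le> length w div (length w - i)"
    using i by (simp add: div_greater_zero_iff Suc_le_eq)
  then have "i \<in> S"
    using i unfolding S_def by auto
  moreover have "finite S"
    unfolding S_def by simp
  ultimately have "Max S \<in> S"
    using Max_in by blast
  moreover have "Max S = j"
    by (simp add: j brk_def S_def)
  ultimately have "j \<in> S" by simp
  then show "j \<in> {i. i < length w \<and> autoc w i}"
    unfolding S_def by auto
qed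

theorem corollary4p5:
  fixes \<Omega> :: "'a set" and w :: "'a list" and n :: nat
  assumes "finite \<Omega>" and "card \<Omega> \<ge> 2"
    and "set w \<subseteq> \<Omega>" and "length w \<ge> 1"
    and "n > 2 * length w"
  shows "Hw \<Omega> w n \<ge> (\<Sum>i\<in>Iset w. Hw \<Omega> w (n - length w + i))"
proof -
  have "(\<Sum>i\<in>Iset w. Hw \<Omega> w (n - length w + i)) =
      int (\<Sum>i\<in>Iset w. card (end_occs_only \<Omega> w (n - length w + i)))"
    using assms(5) by (simp add: Hw_eq_card_end_occs_only[OF assms(1)])
  also have "\<dots> \<le> int (card (overlapped_ends \<Omega> w n))"
    by (rule of_nat_mono[OF sum_card_end_occs_only_le_card_overlapped_ends[OF assms(1,3,5) Iset_subset_autoc]])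
  also have "\<dots> \<le> int (card (end_occs_only \<Omega> w n))"
    by (rule of_nat_mono[OF card_overlapped_ends_le_card_end_occs_only[OF assms(1,2,3,5)]])
  also have "\<dots> = Hw \<Omega> w n"
    using assms(5) by (simp add: Hw_eq_card_end_occs_only[OF assms(1)])
  finally show ?thesis .
qed

end
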